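(* Let $\widehat{\mathcal T}_\bullet$ be an admissible hierarchical mesh. Then the support of any $\widehat\beta\in\widehat{\mathcal H}_\bullet$ is the union of at most $2^d(p+1)^d$ elements of $\widehat{\mathcal T}_\bullet$. Moreover, for any $\widehat T\in\widehat{\mathcal T}_\bullet$ there are at most $2(p+1)^d$ functions $\widehat\beta'\in\widehat{\mathcal H}_\bullet$ with $|{\rm supp}(\widehat\beta')\cap\widehat T|>0$.
   Context: Parameter domain $\widehat\Omega=(0,1)^d$, $d\ge2$; degrees $p_1,\dots,p_d\ge1$, $p:=\max_ip_i$. For each $i$ let $\widehat{\mathcal K}^0_i=(t^0_{i,j})_{j=0}^{N^0_i+p_i}$ be a nondecreasing vector in $[0,1]$ whose first $p_i+1$ entries are $0$, last $p_i+1$ entries are $1$, interior knots of multiplicity $\le p_i$; $\widehat{\mathcal K}^{k+1}_i$ arises from $\widehat{\mathcal K}^k_i$ by inserting the midpoint of every nondegenerate knot span once. $\widehat{\mathcal B}^k$: tensor-product B-splines of degree $(p_1,\dots,p_d)$ for $\widehat{\mathcal K}^k$; $\widehat{\mathcal T}^k$: closed cells of level $k$ (nondegenerate boxes $\prod_i[t^k_{i,j_i-1},t^k_{i,j_i}]$). A hierarchical mesh is given by closed sets $[0,1]^d=\widehat\Omega^0_\bullet\supseteq\widehat\Omega^1_\bullet\supseteq\cdots$, each $\widehat\Omega^k_\bullet$ ($k\ge1$) a union of cells of $\widehat{\mathcal T}^{k-1}$, $\widehat\Omega^M_\bullet=\emptyset$ for some $M$; mesh $\widehat{\mathcal T}_\bullet=\bigcup_k\{\widehat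 T\in\widehat{\mathcal T}^k:\widehat T\subseteq\widehat\Omega^k_\bullet,\widehat T\not\subseteq\widehat\Omega^{k+1}_\bullet\}$ with ${\rm level}(\widehat T)=k$; hierarchical basis $\widehat{\mathcal H}_\bullet=\bigcup_k\{\widehat\beta\in\widehat{\mathcal B}^k:{\rm supp}\,\widehat\beta\subseteq\widehat\Omega^k_\bullet,{\rm supp}\,\widehat\beta\not\subseteq\widehat\Omega^{k+1}_\bullet\}$. Neighbors: $\mathcal N_\bullet(\widehat T)=\{\widehat T'\in\widehat{\mathcal T}_\bullet:\exists\widehat\beta\in\widehat{\mathcal H}_\bullet,\ \widehat T,\widehat T'\subseteq{\rm supp}\,\widehat\beta\}$. The mesh is admissible if $|{\rm level}(\widehat T)-{\rm level}(\widehat T')|\le1$ for all $\widehat T\in\widehat{\mathcal T}_\bullet$, $\widehat T'\in\mathcal N_\bullet(\widehat T)$. *)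

theory Defs
  imports "HOL-Analysis.Analysis"
begin

fun refine_knots :: "real list \<Rightarrow> real list" where
  "refine_knots (x # y # r) =
     (if x < y then x # (x + y) / 2 # refine_knots (y # r) else x # refine_knots (y # r))"
| "refine_knots r = r"

text \<open>Univariate B-splines by the Cox--de Boor recursion (convention 0/0 = 0,
  which is Isabelle's division by zero).\<close>
fun bspl :: "real list \<Rightarrow> nat \<Rightarrow> nat \<Rightarrow> real \<Rightarrow> real" where
  "bspl t 0 j x = (if t ! j \<le> x \<and> x < t ! (j + 1) then 1 else 0)"
| "bspl t (Suc q) j x =
     (x - t ! j) / (t ! (j + q + 1) - t ! j) * bspl t q j x
   + (t ! (j + q + 2) - x) / (t ! (j + q + 2) - t ! (j + 1)) * bspl t q (j + 1) x"

definition open_knot_vector :: "nat \<Rightarrow> real list \<Rightarrow> bool" where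
  "open_knot_vector q t \<longleftrightarrow>
     sorted t \<and> length t \<ge> 2 * (q + 1) \<and>
     take (q + 1) t = replicate (q + 1) 0 \<and>
     drop (length t - (q + 1)) t = replicate (q + 1) 1 \<and>
     (\<forall>x. 0 < x \<and> x < 1 \<longrightarrow> count_list t x \<le> q)"

definition lknots :: "('d \<Rightarrow> real list) \<Rightarrow> nat \<Rightarrow> 'd \<Rightarrow> real list" where
  "lknots K0 k i = (refine_knots ^^ k) (K0 i)"

definition tp_bspline :: "('d::finite \<Rightarrow> real list) \<Rightarrow> ('d \<Rightarrow> nat) \<Rightarrow> ('d \<Rightarrow> nat)
    \<Rightarrow> real^'d \<Rightarrow> real" where
  "tp_bspline t p j x = (\<Prod>i\<in>UNIV. bspl (t i) (p i) (j i) (x $ i))"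

definition bsplines_lv :: "('d::finite \<Rightarrow> real list) \<Rightarrow> ('d \<Rightarrow> nat) \<Rightarrow> nat
    \<Rightarrow> (real^'d \<Rightarrow> real) set" where
  "bsplines_lv K0 p k =
     {tp_bspline (lknots K0 k) p j | j. \<forall>i. j i + p i + 1 < length (lknots K0 k i)}"

definition cells_lv :: "('d::finite \<Rightarrow> real list) \<Rightarrow> nat \<Rightarrow> (real^'d) set set" where
  "cells_lv K0 k =
     {{x. \<forall>i. lknots K0 k i ! (j i - 1) \<le> x $ i \<and> x $ i \<le> lknots K0 k i ! (j i)} | j.
        \<forall>i. 0 < j i \<and> j i < length (lknots K0 k i) \<and>
            lknots K0 k i ! (j i - 1) < lknots K0 k i ! (j i)}"

definition supp :: "(real^'d::finite \<Rightarrow> real) \<Rightarrow> (real^'d) set" where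
  "supp f = closure {x. f x \<noteq> 0}"

definition hier_domains :: "('d::finite \<Rightarrow> real list) \<Rightarrow> (nat \<Rightarrow> (real^'d) set) \<Rightarrow> bool" where
  "hier_domains K0 Om \<longleftrightarrow>
     Om 0 = {x. \<forall>i. 0 \<le> x $ i \<and> x $ i \<le> 1} \<and>
     (\<forall>k. Om (Suc k) \<subseteq> Om k) \<and>
     (\<forall>k. \<exists>S \<subseteq> cells_lv K0 k. Om (Suc k) = \<Union>S) \<and>
     (\<exists>M. Om M = {})"

definition hmesh_lv :: "('d::finite \<Rightarrow> real list) \<Rightarrow> (nat \<Rightarrow> (real^'d) set)
    \<Rightarrow> (nat \<times> (real^'d) set) set" where
  "hmesh_lv K0 Om = {(k, T) | k T. T \<in> cells_lv K0 k \<and> T \<subseteq> Om k \<and> \<not> T \<subseteq> Om (Suc k)}"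

definition hmesh :: "('d::finite \<Rightarrow> real list) \<Rightarrow> (nat \<Rightarrow> (real^'d) set) \<Rightarrow> (real^'d) set set" where
  "hmesh K0 Om = snd ` hmesh_lv K0 Om"

definition hbasis :: "('d::finite \<Rightarrow> real list) \<Rightarrow> ('d \<Rightarrow> nat) \<Rightarrow> (nat \<Rightarrow> (real^'d) set)
    \<Rightarrow> (real^'d \<Rightarrow> real) set" where
  "hbasis K0 p Om = {\<beta> | \<beta> k. \<beta> \<in> bsplines_lv K0 p k \<and> supp \<beta> \<subseteq> Om k \<and> \<not> supp \<beta> \<subseteq> Om (Suc k)}"

definition admissible :: "('d::finite \<Rightarrow> real list) \<Rightarrow> ('d \<Rightarrow> nat) \<Rightarrow> (nat \<Rightarrow> (real^'d) set) \<Rightarrow> bool" where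
  "admissible K0 p Om \<longleftrightarrow>
     (\<forall>(k, T) \<in> hmesh_lv K0 Om. \<forall>(k', T') \<in> hmesh_lv K0 Om.
        (\<exists>\<beta> \<in> hbasis K0 p Om. T \<subseteq> supp \<beta> \<and> T' \<subseteq> supp \<beta>) \<longrightarrow> \<bar>int k - int k'\<bar> \<le> 1)"

end

theory Submission
  imports Defs
begin

text \<open>A basis function of level \<open>k\<close> is supported on the box spanned by \<open>p\<^sub>i + 2\<close> consecutive
  level-\<open>k\<close> knots in each direction. By admissibility, every mesh element inside this box has
  level \<open>k\<close> or \<open>k + 1\<close>, and distinct such elements have distinct lower corners, which are
  level-\<open>(k + 1)\<close> knots of the box: at most \<open>2 (p\<^sub>i + 1)\<close> per direction. Conversely, a
  basis function overlapping a mesh element \<open>T\<close> of level \<open>k\<close> in positive measure has level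
  \<open>k\<close> or \<open>k - 1\<close>: higher levels are supported in \<open>Om (k + 1)\<close>, which meets \<open>T\<close> in a null set,
  while for lower levels \<open>T\<close> lies in the support and admissibility applies. At a fixed level,
  at most \<open>p\<^sub>i + 1\<close> univariate B-splines per direction are nonzero on a given cell.\<close>

section \<open>Knot spans and midpoint refinement\<close>

definition knot_span :: "real set \<Rightarrow> real \<Rightarrow> real \<Rightarrow> bool" where
  "knot_span V a b \<longleftrightarrow> a \<in> V \<and> b \<in> V \<and> a < b \<and> (\<forall>v\<in>V. v \<le> a \<or> b \<le> v)"

definition span_midpoints :: "real set \<Rightarrow> real set" where
  "span_midpoints V = {(a + b) / 2 | a b. knot_span V a b}"

lemma knot_span_eq_if_common_point:
  assumes "knot_span V a b" "knot_span V e f" "e \<le> z" "z \<le> f" "a < z" "z < b"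
  shows "a = e \<and> b = f"
proof -
  have "e \<le> a" using assms unfolding knot_span_def by force
  moreover have "b \<le> f" using assms unfolding knot_span_def by force
  moreover have "a \<le> e" using assms calculation unfolding knot_span_def by force
  moreover have "f \<le> b" using assms calculation unfolding knot_span_def by force
  ultimately show ?thesis by auto
qed

lemma knot_span_eq_if_overlap:
  assumes "knot_span V a b" "knot_span V e f" "max a e < min b f"
  shows "a = e \<and> b = f"
  using knot_span_eq_if_common_point[OF assms(1,2), of "(max a e + min b f)/2"] assms(3) by auto

lemma knot_span_Cons:
  assumes "sorted (x # y # r)"
  shows "knot_span (set (x # y # r)) a b \<longleftrightarrow> (x < y \<and> a = x \<and> b = y) \<or> knot_span (set (y # r)) a b"
proof -
  have W: "\<forall>w\<in>set (y # r). y \<le> w" and xy: "x \<le> y" using assms by auto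
  show ?thesis
  proof
    assume sp: "knot_span (set (x # y # r)) a b"
    show "(x < y \<and> a = x \<and> b = y) \<or> knot_span (set (y # r)) a b"
    proof (cases "a = x")
      case True
      have bW: "b \<in> set (y # r)" using sp True unfolding knot_span_def by auto
      have "y \<le> a \<or> b \<le> y" using sp unfolding knot_span_def by auto
      then show ?thesis
      proof
        assume "b \<le> y" then have "b = y" using W bW by force
        then show ?thesis using sp True unfolding knot_span_def by auto
      next
        assume "y \<le> a" then have "a = y" using True xy by auto
        then show ?thesis using sp bW unfolding knot_span_def by auto
      qed
    next
      case False
      then have "a \<in> set (y # r)" using sp unfolding knot_span_def by auto
      then have "b \<noteq> x" using W xy sp unfolding knot_span_def by force
      then show ?thesis using sp False unfolding knot_span_def by auto
    qed
  next
    assume "(x < y \<and> a = x \<and> b = y) \<or> knot_span (set (y # r)) a b"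
    then show "knot_span (set (x # y # r)) a b"
    proof
      assume "x < y \<and> a = x \<and> b = y" then show ?thesis using W unfolding knot_span_def by auto
    next
      assume sp: "knot_span (set (y # r)) a b"
      then have "x \<le> a" using W xy unfolding knot_span_def by force
      then show ?thesis using sp unfolding knot_span_def by auto
    qed
  qed
qed

lemma span_midpoints_Cons:
  assumes "sorted (x # y # r)"
  shows "span_midpoints (set (x # y # r)) = (if x < y then {(x + y)/2} else {}) \<union> span_midpoints (set (y # r))"
proof -
  have "span_midpoints (set (x # y # r)) = {(a + b) / 2 | a b. (x < y \<and> a = x \<and> b = y) \<or> knot_span (set (y # r)) a b}"
    unfolding span_midpoints_def using knot_span_Cons[OF assms] by presburger
  also have "\<dots> = (if x < y then {(x + y)/2} else {}) \<union> span_midpoints (set (y # r))"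
    unfolding span_midpoints_def by (auto; force)
  finally show ?thesis .
qed

lemma span_midpoints_short: "length t \<le> 1 \<Longrightarrow> span_midpoints (set t) = {}"
  unfolding span_midpoints_def knot_span_def by (cases t) auto

lemma set_refine_knots: "sorted t \<Longrightarrow> set (refine_knots t) = set t \<union> span_midpoints (set t)"
proof (induction t rule: refine_knots.induct)
  case (1 x y r)
  then have s: "sorted (y # r)" by simp
  have IH: "set (refine_knots (y # r)) = set (y # r) \<union> span_midpoints (set (y # r))" by (cases "x < y") (use 1 s in auto)
  have M: "span_midpoints (set (x # y # r)) = (if x < y then {(x + y)/2} else {}) \<union> span_midpoints (set (y # r))"
    using span_midpoints_Cons[OF "1.prems"] .
  show ?case unfolding M using IH by auto
next
  case ("2_1") then show ?case using span_midpoints_short[of "[]"] by simp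
next
  case ("2_2" v) then show ?case using span_midpoints_short[of "[v]"] by simp
qed

lemma knot_span_midpoint_strict: "knot_span V a b \<Longrightarrow> a < (a+b)/2 \<and> (a+b)/2 < b"
  unfolding knot_span_def by auto

lemma sorted_refine_knots: "sorted t \<Longrightarrow> sorted (refine_knots t)"
proof (induction t rule: refine_knots.induct)
  case (1 x y r)
  then have s: "sorted (y # r)" by simp
  have ge: "\<forall>z \<in> set (refine_knots (y # r)). y \<le> z"
  proof
    fix z assume "z \<in> set (refine_knots (y # r))"
    then have "z \<in> set (y # r) \<or> z \<in> span_midpoints (set (y # r))" using set_refine_knots[OF s] by auto
    then show "y \<le> z"
    proof
      assume "z \<in> set (y # r)" then show ?thesis using s by auto
    next
      assume "z \<in> span_midpoints (set (y # r))"
      then obtain a b where "knot_span (set (y#r)) a b" "z = (a+b)/2" unfolding span_midpoints_def by auto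
      then show ?thesis using s unfolding knot_span_def by auto
    qed
  qed
  have "x \<le> y" using 1 by simp
  then show ?case using 1 s ge by auto
qed auto

lemma knot_span_refined_within:
  assumes fin: "finite V" and sp: "knot_span (V \<union> span_midpoints V) c d"
  shows "\<exists>a b. knot_span V a b \<and> a \<le> c \<and> d \<le> b"
proof -
  have cV: "c \<in> V \<union> span_midpoints V" and dV: "d \<in> V \<union> span_midpoints V" and cd: "c < d"
    using sp unfolding knot_span_def by auto
  have ex1: "\<exists>v\<in>V. v \<le> c"
  proof (cases "c \<in> V")
    case False then obtain e f where "knot_span V e f" "c = (e+f)/2" using cV unfolding span_midpoints_def by auto
    then show ?thesis unfolding knot_span_def by (intro bexI[of _ e]) auto
  qed auto
  have ex2: "\<exists>v\<in>V. c < v"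
  proof (cases "d \<in> V")
    case False then obtain e f where "knot_span V e f" "d = (e+f)/2" using dV unfolding span_midpoints_def by auto
    then show ?thesis using cd unfolding knot_span_def by (intro bexI[of _ f]) auto
  qed (use cd in auto)
  define a where "a = Max {v\<in>V. v \<le> c}"
  define b where "b = Min {v\<in>V. c < v}"
  have fa: "finite {v\<in>V. v \<le> c}" "{v\<in>V. v \<le> c} \<noteq> {}" using fin ex1 by auto
  have fb: "finite {v\<in>V. c < v}" "{v\<in>V. c < v} \<noteq> {}" using fin ex2 by auto
  have aV: "a \<in> V" "a \<le> c" using Max_in[OF fa] unfolding a_def by auto
  have bV: "b \<in> V" "c < b" using Min_in[OF fb] unfolding b_def by auto
  have "\<forall>v\<in>V. v \<le> a \<or> b \<le> v"
  proof
    fix v assume "v \<in> V"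
    show "v \<le> a \<or> b \<le> v"
    proof (cases "v \<le> c")
      case True then show ?thesis using Max_ge[OF fa(1)] \<open>v \<in> V\<close> unfolding a_def by auto
    next
      case False then show ?thesis using Min_le[OF fb(1)] \<open>v \<in> V\<close> unfolding b_def by auto
    qed
  qed
  then have "knot_span V a b" using aV bV unfolding knot_span_def by auto
  moreover have "d \<le> b"
  proof -
    have "b \<in> V \<union> span_midpoints V" using bV by auto
    then show ?thesis using sp bV(2) unfolding knot_span_def by force
  qed
  ultimately show ?thesis using aV by auto
qed

lemma knot_span_refined_halves:
  assumes sp: "knot_span V a b"
  shows "knot_span (V \<union> span_midpoints V) a ((a+b)/2) \<and> knot_span (V \<union> span_midpoints V) ((a+b)/2) b"
proof -
  let ?m = "(a+b)/2"
  have key: "\<forall>v\<in>V \<union> span_midpoints V. v \<le> a \<or> v = ?m \<or> b \<le> v"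
  proof
    fix v assume "v \<in> V \<union> span_midpoints V"
    then show "v \<le> a \<or> v = ?m \<or> b \<le> v"
    proof
      assume "v \<in> V" then show ?thesis using sp unfolding knot_span_def by auto
    next
      assume "v \<in> span_midpoints V"
      then obtain e f where ef: "knot_span V e f" "v = (e+f)/2" unfolding span_midpoints_def by auto
      show ?thesis
      proof (cases "max a e < min b f")
        case True then have "a = e \<and> b = f" using knot_span_eq_if_overlap[OF sp ef(1)] by auto
        then show ?thesis using ef by auto
      next
        case False then show ?thesis using ef sp unfolding knot_span_def by auto
      qed
    qed
  qed
  have "?m \<in> span_midpoints V" unfolding span_midpoints_def using sp by auto
  moreover have "\<forall>v\<in>V \<union> span_midpoints V. v \<le> a \<or> ?m \<le> v"
  proof
    fix v assume "v \<in> V \<union> span_midpoints V"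
    then have "v \<le> a \<or> v = ?m \<or> b \<le> v" using key by blast
    then show "v \<le> a \<or> ?m \<le> v" using knot_span_midpoint_strict[OF sp] by auto
  qed
  moreover have "\<forall>v\<in>V \<union> span_midpoints V. v \<le> ?m \<or> b \<le> v"
  proof
    fix v assume "v \<in> V \<union> span_midpoints V"
    then have "v \<le> a \<or> v = ?m \<or> b \<le> v" using key by blast
    then show "v \<le> ?m \<or> b \<le> v" using knot_span_midpoint_strict[OF sp] by auto
  qed
  ultimately show ?thesis using sp knot_span_midpoint_strict[OF sp] unfolding knot_span_def by auto
qed

lemma knot_span_covering:
  assumes fin: "finite V" and "lo \<in> V" "hi \<in> V" "lo < hi" "lo \<le> x" "x \<le> hi"
  shows "\<exists>c d. knot_span V c d \<and> lo \<le> c \<and> c \<le> x \<and> x \<le> d \<and> d \<le> hi"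
proof -
  define c where "c = Max {v\<in>V. v \<le> x \<and> v < hi}"
  have fa: "finite {v\<in>V. v \<le> x \<and> v < hi}" "{v\<in>V. v \<le> x \<and> v < hi} \<noteq> {}" using fin assms by auto
  have cV: "c \<in> V" "c \<le> x" "c < hi" "lo \<le> c"
    using Max_in[OF fa] Max_ge[OF fa(1), of lo] assms unfolding c_def by auto
  define d where "d = Min {v\<in>V. c < v}"
  have fb: "finite {v\<in>V. c < v}" "{v\<in>V. c < v} \<noteq> {}" using fin assms cV by auto
  have dV: "d \<in> V" "c < d" "d \<le> hi" using Min_in[OF fb] Min_le[OF fb(1), of hi] assms cV unfolding d_def by auto
  have "\<forall>v\<in>V. v \<le> c \<or> d \<le> v"
  proof
    fix v assume "v \<in> V"
    show "v \<le> c \<or> d \<le> v"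
    proof (cases "c < v")
      case True then show ?thesis using Min_le[OF fb(1)] \<open>v \<in> V\<close> unfolding d_def by auto
    qed auto
  qed
  then have sp: "knot_span V c d" using cV dV unfolding knot_span_def by auto
  have "x \<le> d"
  proof (rule ccontr)
    assume "\<not> x \<le> d"
    then have "d \<in> {v\<in>V. v \<le> x \<and> v < hi} \<or> d = hi" using dV by auto
    then show False
    proof
      assume "d \<in> {v\<in>V. v \<le> x \<and> v < hi}"
      then have "d \<le> c" using Max_ge[OF fa(1), of d] unfolding c_def by auto
      then show False using dV by auto
    next
      assume "d = hi" then show False using \<open>\<not> x \<le> d\<close> assms by auto
    qed
  qed
  then show ?thesis using sp cV dV by auto
qed

definition next_knot :: "real set \<Rightarrow> real \<Rightarrow> real" where
  "next_knot V c = Min {v\<in>V. c < v}"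

lemma knot_span_next_knot:
  assumes fin: "finite V" and sp: "knot_span V c d"
  shows "d = next_knot V c"
proof -
  have fb: "finite {v\<in>V. c < v}" "d \<in> {v\<in>V. c < v}" using fin sp unfolding knot_span_def by auto
  have "\<forall>v\<in>{v\<in>V. c < v}. d \<le> v" using sp unfolding knot_span_def by auto
  then show ?thesis unfolding next_knot_def using fb
    by (metis (no_types, lifting) Min_eqI)
qed

lemma card_refined_knots_Ico:
  assumes fin: "finite V" and lo: "lo \<in> V"
  shows "card ((V \<union> span_midpoints V) \<inter> {lo..<hi}) \<le> 2 * card (V \<inter> {lo..<hi})"
proof -
  let ?A = "V \<inter> {lo..<hi}"
  have "(V \<union> span_midpoints V) \<inter> {lo..<hi} \<subseteq> ?A \<union> (\<lambda>a. (a + next_knot V a)/2) ` ?A"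
  proof
    fix v assume v: "v \<in> (V \<union> span_midpoints V) \<inter> {lo..<hi}"
    show "v \<in> ?A \<union> (\<lambda>a. (a + next_knot V a)/2) ` ?A"
    proof (cases "v \<in> V")
      case False
      then obtain a b where ab: "knot_span V a b" "v = (a+b)/2" using v unfolding span_midpoints_def by auto
      have "b = next_knot V a" using knot_span_next_knot[OF fin ab(1)] .
      moreover have "lo \<le> a" using ab lo v unfolding knot_span_def by force
      moreover have "a < hi" using ab v unfolding knot_span_def by auto
      ultimately show ?thesis using ab unfolding knot_span_def by auto
    qed (use v in auto)
  qed
  then have "card ((V \<union> span_midpoints V) \<inter> {lo..<hi}) \<le> card (?A \<union> (\<lambda>a. (a + next_knot V a)/2) ` ?A)"
    by (intro card_mono) (use fin in auto)
  also have "\<dots> \<le> card ?A + card ((\<lambda>a. (a + next_knot V a)/2) ` ?A)" by (rule card_Un_le)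
  also have "\<dots> \<le> card ?A + card ?A" using card_image_le[of ?A] fin by auto
  finally show ?thesis by simp
qed

lemma knot_span_iff_nth:
  assumes s: "sorted t"
  shows "knot_span (set t) a b \<longleftrightarrow> (\<exists>j. 0 < j \<and> j < length t \<and> t!(j-1) < t!j \<and> a = t!(j-1) \<and> b = t!j)"
proof
  assume "\<exists>j. 0 < j \<and> j < length t \<and> t!(j-1) < t!j \<and> a = t!(j-1) \<and> b = t!j"
  then obtain j where j: "0 < j" "j < length t" "t!(j-1) < t!j" "a = t!(j-1)" "b = t!j" by blast
  have "\<forall>v\<in>set t. v \<le> a \<or> b \<le> v"
  proof
    fix v assume "v \<in> set t"
    then obtain m where m: "m < length t" "v = t!m" by (auto simp: in_set_conv_nth)
    show "v \<le> a \<or> b \<le> v"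
    proof (cases "m \<le> j - 1")
      case True then show ?thesis using sorted_nth_mono[OF s True] j m by auto
    next
      case False then have "j \<le> m" by auto
      then show ?thesis using sorted_nth_mono[OF s _ m(1)] j m by auto
    qed
  qed
  then show "knot_span (set t) a b" using j unfolding knot_span_def by auto
next
  assume sp: "knot_span (set t) a b"
  define M where "M = {m. m < length t \<and> t!m = a}"
  have fM: "finite M" "M \<noteq> {}" using sp unfolding M_def knot_span_def by (auto simp: in_set_conv_nth)
  define m where "m = Max M"
  have mM: "m < length t" "t!m = a" using Max_in[OF fM] unfolding m_def M_def by auto
  obtain n where n: "n < length t" "t!n = b" using sp unfolding knot_span_def by (auto simp: in_set_conv_nth)
  have "m < n"
  proof (rule ccontr)
    assume "\<not> m < n" then have "t!n \<le> t!m" using sorted_nth_mono[OF s _ mM(1)] by auto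
    then show False using sp mM n unfolding knot_span_def by auto
  qed
  then have m1: "m + 1 < length t" using n by auto
  have "t!(m+1) \<ge> a" using sorted_nth_mono[OF s _ m1] mM by auto
  moreover have "t!(m+1) \<noteq> a"
  proof
    assume "t!(m+1) = a" then have "m+1 \<in> M" using m1 unfolding M_def by auto
    then show False using Max_ge[OF fM(1)] unfolding m_def by fastforce
  qed
  ultimately have gt: "t!(m+1) > a" by auto
  have le: "t!(m+1) \<le> b" using sorted_nth_mono[OF s _ n(1), of "m+1"] \<open>m < n\<close> n by auto
  have "t!(m+1) \<in> set t" using m1 by auto
  then have "t!(m+1) \<ge> b" using sp gt unfolding knot_span_def by force
  then have "t!(m+1) = b" using le by auto
  then show "\<exists>j. 0 < j \<and> j < length t \<and> t!(j-1) < t!j \<and> a = t!(j-1) \<and> b = t!j"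
    using m1 mM gt by (intro exI[of _ "m+1"]) auto
qed

lemma card_knots_Ico_nth:
  assumes s: "sorted t" and j: "j + q + 1 < length t"
  shows "card (set t \<inter> {t!j..<t!(j+q+1)}) \<le> q + 1"
proof -
  have "set t \<inter> {t!j..<t!(j+q+1)} \<subseteq> (\<lambda>m. t!m) ` {j..j+q}"
  proof
    fix v assume v: "v \<in> set t \<inter> {t!j..<t!(j+q+1)}"
    then obtain m where m: "m < length t" "v = t!m" by (auto simp: in_set_conv_nth)
    show "v \<in> (\<lambda>m. t!m) ` {j..j+q}"
    proof (cases "m < j")
      case True then have "t!m \<le> t!j" using sorted_nth_mono[OF s _ ] j by auto
      then have "v = t!j" using v m by auto
      then show ?thesis by auto
    next
      case False
      have "m \<le> j + q"
      proof (rule ccontr)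
        assume "\<not> m \<le> j + q"
        then have "t!(j+q+1) \<le> t!m" using sorted_nth_mono[OF s _ m(1)] by auto
        then show False using v m by auto
      qed
      then show ?thesis using False m by auto
    qed
  qed
  then have "card (set t \<inter> {t!j..<t!(j+q+1)}) \<le> card ((\<lambda>m. t!m) ` {j..j+q})"
    by (intro card_mono) auto
  also have "\<dots> \<le> card {j..j+q}" by (rule card_image_le) auto
  finally show ?thesis by simp
qed

lemma card_bspline_indices_overlapping_span:
  assumes s: "sorted t" and sp: "knot_span (set t) a' b'" and "a' \<le> a" "b \<le> b'"
  shows "finite {m. m + q + 1 < length t \<and> t!m < b \<and> a < t!(m+q+1)}"
    "card {m. m + q + 1 < length t \<and> t!m < b \<and> a < t!(m+q+1)} \<le> q + 1"
proof -
  obtain j where j: "0 < j" "j < length t" "a' = t!(j-1)" "b' = t!j"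
    using sp knot_span_iff_nth[OF s] by blast
  have sub: "{m. m + q + 1 < length t \<and> t!m < b \<and> a < t!(m+q+1)} \<subseteq> {j - 1 - q..<j}"
  proof
    fix m assume m: "m \<in> {m. m + q + 1 < length t \<and> t!m < b \<and> a < t!(m+q+1)}"
    have "m < j"
    proof (rule ccontr)
      assume "\<not> m < j" then have "t!j \<le> t!m" using sorted_nth_mono[OF s, of j m] m by auto
      then show False using m j assms by auto
    qed
    moreover have "j - 1 < m + q + 1"
    proof (rule ccontr)
      assume "\<not> j - 1 < m + q + 1" then have "t!(m+q+1) \<le> t!(j-1)" using sorted_nth_mono[OF s, of "m+q+1" "j-1"] j by auto
      then show False using m j assms by auto
    qed
    ultimately show "m \<in> {j - 1 - q..<j}" by auto
  qed
  then show "finite {m. m + q + 1 < length t \<and> t!m < b \<and> a < t!(m+q+1)}" using finite_subset by blast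
  have "card {m. m + q + 1 < length t \<and> t!m < b \<and> a < t!(m+q+1)} \<le> card {j - 1 - q..<j}"
    using sub by (intro card_mono) auto
  then show "card {m. m + q + 1 < length t \<and> t!m < b \<and> a < t!(m+q+1)} \<le> q + 1" by auto
qed

lemma bspl_nonneg_support:
  assumes s: "sorted t"
  shows "j + q + 1 < length t \<Longrightarrow> 0 \<le> bspl t q j x \<and> (bspl t q j x \<noteq> 0 \<longrightarrow> t!j \<le> x \<and> x < t!(j+q+1))"
proof (induction q arbitrary: j)
  case 0 then show ?case by auto
next
  case (Suc q)
  have l1: "j + q + 1 < length t" and l2: "(j+1) + q + 1 < length t" using Suc.prems by auto
  note IH1 = Suc.IH[OF l1] and IH2 = Suc.IH[OF l2]
  have m1: "t!j \<le> t!(j+1)" "t!(j+q+1) \<le> t!(j+q+2)" using sorted_nth_mono[OF s] Suc.prems by auto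
  let ?A = "(x - t ! j) / (t ! (j + q + 1) - t ! j) * bspl t q j x"
  let ?B = "(t ! (j + q + 2) - x) / (t ! (j + q + 2) - t ! (j + 1)) * bspl t q (j + 1) x"
  have A: "0 \<le> ?A \<and> (?A \<noteq> 0 \<longrightarrow> t!j \<le> x \<and> x < t!(j+q+1))"
  proof (cases "bspl t q j x = 0")
    case False
    then have "t!j \<le> x" "x < t!(j+q+1)" using IH1 by auto
    then show ?thesis using IH1 by auto
  qed auto
  have B: "0 \<le> ?B \<and> (?B \<noteq> 0 \<longrightarrow> t!(j+1) \<le> x \<and> x < t!(j+q+2))"
  proof (cases "bspl t q (j+1) x = 0")
    case False
    then have "t!(j+1) \<le> x" "x < t!(j+q+2)" using IH2 by auto
    then show ?thesis using IH2 by auto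
  qed auto
  have eq: "bspl t (Suc q) j x = ?A + ?B" by (simp add: add.commute add.left_commute)
  show ?case unfolding eq using A B m1 by auto
qed

lemma bspl_pos_interior:
  assumes s: "sorted t"
  shows "j + q + 1 < length t \<Longrightarrow> t!j < x \<Longrightarrow> x < t!(j+q+1) \<Longrightarrow> x \<notin> set t \<Longrightarrow> 0 < bspl t q j x"
proof (induction q arbitrary: j)
  case 0 then show ?case by auto
next
  case (Suc q)
  have l1: "j + q + 1 < length t" and l2: "(j+1) + q + 1 < length t" using Suc.prems by auto
  have m1: "t!j \<le> t!(j+1)" "t!(j+q+1) \<le> t!(j+q+2)" "t!(j+1) \<le> t!(j+q+1)" using sorted_nth_mono[OF s] Suc.prems by auto
  let ?A = "(x - t ! j) / (t ! (j + q + 1) - t ! j) * bspl t q j x"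
  let ?B = "(t ! (j + q + 2) - x) / (t ! (j + q + 2) - t ! (j + 1)) * bspl t q (j + 1) x"
  have A: "0 \<le> ?A"
  proof (cases "bspl t q j x = 0")
    case False
    then have "t!j \<le> x" "x < t!(j+q+1)" using bspl_nonneg_support[OF s l1] by auto
    then show ?thesis using bspl_nonneg_support[OF s l1] by auto
  qed auto
  have B: "0 \<le> ?B"
  proof (cases "bspl t q (j+1) x = 0")
    case False
    then have "t!(j+1) \<le> x" "x < t!(j+q+2)" using bspl_nonneg_support[OF s l2] by auto
    then show ?thesis using bspl_nonneg_support[OF s l2] by auto
  qed auto
  have eq: "bspl t (Suc q) j x = ?A + ?B" by (simp add: add.commute add.left_commute)
  have xne: "x \<noteq> t!(j+q+1)" using Suc.prems l1 by auto
  show ?case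
  proof (cases "x < t!(j+q+1)")
    case True
    then have "0 < bspl t q j x" using Suc.IH[OF l1] Suc.prems by auto
    moreover have "0 < (x - t ! j) / (t ! (j + q + 1) - t ! j)" using True Suc.prems by auto
    ultimately have "0 < ?A" using mult_pos_pos by blast
    then show ?thesis unfolding eq using B by auto
  next
    case False
    then have x1: "t!(j+1) < x" using xne m1 by auto
    then have "0 < bspl t q (j+1) x" using Suc.IH[OF l2] Suc.prems by auto
    moreover have "0 < (t ! (j + q + 2) - x) / (t ! (j + q + 2) - t ! (j + 1))" using x1 Suc.prems by auto
    ultimately have "0 < ?B" using mult_pos_pos by blast
    then show ?thesis unfolding eq using A by auto
  qed
qed

section \<open>Boxes, null sets and tensor-product B-splines\<close>

definition coord_box :: "('d::finite \<Rightarrow> real) \<Rightarrow> ('d \<Rightarrow> real) \<Rightarrow> (real^'d) set" where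
  "coord_box a b = {x. \<forall>i. a i \<le> x$i \<and> x$i \<le> b i}"

lemma closed_coord_box: "closed (coord_box a b)"
  unfolding coord_box_def
  by (intro closed_Collect_all closed_Collect_conj closed_Collect_le continuous_intros continuous_on_component)

lemma coord_box_Int: "coord_box a b \<inter> coord_box c d = coord_box (\<lambda>i. max (a i) (c i)) (\<lambda>i. min (b i) (d i))"
  unfolding coord_box_def by auto

lemma coord_box_subsetD:
  assumes "\<forall>i. c i \<le> d i" "coord_box c d \<subseteq> coord_box a b"
  shows "a i \<le> c i \<and> d i \<le> b i"
proof -
  have "(\<chi> i. c i) \<in> coord_box c d" "(\<chi> i. d i) \<in> coord_box c d" using assms unfolding coord_box_def by auto
  then have "(\<chi> i. c i) \<in> coord_box a b" "(\<chi> i. d i) \<in> coord_box a b" using assms by auto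
  then show ?thesis unfolding coord_box_def by auto
qed

lemma null_sets_coordinate_hyperplane: "{x::real^'d::finite. x$i = c} \<in> null_sets lborel"
proof -
  have "negligible {x::real^'d. x \<bullet> axis i 1 = c}"
    by (rule negligible_standard_hyperplane) (simp add: Basis_vec_def, blast)
  hence "negligible {x::real^'d. x$i = c}" by (simp add: cart_eq_inner_axis)
  hence 1: "{x::real^'d. x$i = c} \<in> null_sets lebesgue" by (simp add: negligible_iff_null_sets)
  have 2: "{x::real^'d. x$i = c} \<in> sets lborel"
    using borel_closed[of "{x::real^'d. x$i = c}"] by (simp add: closed_Collect_eq continuous_on_component)
  show ?thesis
    using 1 2 null_sets_completion_iff by blast
qed

lemma emeasure_subset_coordinate_hyperplanes:
  fixes S :: "(real^'d::finite) set"
  assumes "finite I" "S \<subseteq> (\<Union>ic\<in>I. {x::real^'d. x$(fst ic) = snd ic})"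
  shows "emeasure lborel S = 0"
proof -
  have N: "(\<Union>ic\<in>I. {x::real^'d. x$(fst ic) = snd ic}) \<in> null_sets lborel"
    using assms(1) by (intro null_sets_UN') (auto intro: countable_finite null_sets_coordinate_hyperplane)
  show ?thesis
  proof (cases "S \<in> sets lborel")
    case True then show ?thesis using null_sets_subset[OF N True assms(2)] by auto
  next
    case False then show ?thesis by (rule emeasure_notin_sets)
  qed
qed

lemma emeasure_degenerate_coord_box:
  fixes S :: "(real^'d::finite) set"
  assumes "S \<subseteq> coord_box c d" "d i \<le> c i"
  shows "emeasure lborel S = 0"
proof -
  have "S \<subseteq> (\<Union>ic\<in>{(i, c i)}. {x::real^'d. x$(fst ic) = snd ic})"
  proof
    fix x assume "x \<in> S"
    then have "c i \<le> x$i" "x$i \<le> d i" using assms unfolding coord_box_def by auto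
    then show "x \<in> (\<Union>ic\<in>{(i, c i)}. {x::real^'d. x$(fst ic) = snd ic})" using assms by auto
  qed
  then show ?thesis by (intro emeasure_subset_coordinate_hyperplanes[of "{(i, c i)}"]) auto
qed

lemma exists_near_avoiding_finite:
  fixes a b x e :: real
  assumes "a < b" "a \<le> x" "x \<le> b" "finite F" "0 < e"
  shows "\<exists>y. a < y \<and> y < b \<and> y \<notin> F \<and> \<bar>y - x\<bar> < e"
proof -
  have "max a (x - e) < min b (x + e)" using assms by auto
  then have "infinite {max a (x - e)<..<min b (x + e)}" by (rule infinite_Ioo)
  then have "{max a (x - e)<..<min b (x + e)} - F \<noteq> {}" using assms(4)
    by (metis finite_subset Diff_eq_empty_iff)
  then obtain y where "y \<in> {max a (x - e)<..<min b (x + e)} - F" by blast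
  then show ?thesis by (intro exI[of _ y]) auto
qed

lemma tp_bspline_nonzero_iff: "tp_bspline t p j x \<noteq> 0 \<longleftrightarrow> (\<forall>i. bspl (t i) (p i) (j i) (x$i) \<noteq> 0)"
  unfolding tp_bspline_def by (simp del: bspl.simps)

lemma tp_bspline_nonzero_subset_coord_box:
  assumes s: "\<forall>i. sorted (t i)" and l: "\<forall>i. j i + p i + 1 < length (t i)"
  shows "{x. tp_bspline t p j x \<noteq> 0} \<subseteq> coord_box (\<lambda>i. t i!(j i)) (\<lambda>i. t i!(j i + p i + 1))"
proof
  fix x assume "x \<in> {x. tp_bspline t p j x \<noteq> 0}"
  then have "\<forall>i. bspl (t i) (p i) (j i) (x$i) \<noteq> 0" using tp_bspline_nonzero_iff[of t p j x] by simp
  then show "x \<in> coord_box (\<lambda>i. t i!(j i)) (\<lambda>i. t i!(j i + p i + 1))"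
    using bspl_nonneg_support[OF s[rule_format] l[rule_format]] unfolding coord_box_def
    by (auto intro: less_imp_le)
qed

text \<open>Points avoiding all knots are dense in the box, and there every factor is positive.\<close>
lemma coord_box_subset_closure_tp_bspline_nonzero:
  fixes t :: "'d::finite \<Rightarrow> real list"
  assumes s: "\<forall>i. sorted (t i)" and l: "\<forall>i. j i + p i + 1 < length (t i)"
    and lt: "\<forall>i. t i!(j i) < t i!(j i + p i + 1)"
  shows "coord_box (\<lambda>i. t i!(j i)) (\<lambda>i. t i!(j i + p i + 1)) \<subseteq> closure {x. tp_bspline t p j x \<noteq> 0}"
proof
  let ?lo = "\<lambda>i. t i!(j i)" and ?hi = "\<lambda>i. t i!(j i + p i + 1)"
  fix x assume x: "x \<in> coord_box ?lo ?hi"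
  show "x \<in> closure {x. tp_bspline t p j x \<noteq> 0}"
    unfolding closure_approachable
  proof (intro allI impI)
    fix e :: real assume "0 < e"
    then have ce: "0 < e / real CARD('d)" by auto
    have "\<forall>i. \<exists>y. ?lo i < y \<and> y < ?hi i \<and> y \<notin> set (t i) \<and> \<bar>y - x$i\<bar> < e / real CARD('d)"
      using exists_near_avoiding_finite[OF _ _ _ _ ce] lt x unfolding coord_box_def by auto
    then obtain y where y: "\<And>i. ?lo i < y i \<and> y i < ?hi i \<and> y i \<notin> set (t i) \<and> \<bar>y i - x$i\<bar> < e / real CARD('d)"
      by metis
    let ?y = "\<chi> i. y i"
    have "bspl (t i) (p i) (j i) (?y$i) \<noteq> 0" for i
      using bspl_pos_interior[OF s[rule_format] l[rule_format]] y by (simp add: less_imp_neq[symmetric])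
    then have "tp_bspline t p j ?y \<noteq> 0" using tp_bspline_nonzero_iff[of t p j ?y] by blast
    moreover have "dist ?y x < e"
    proof -
      have "dist ?y x = norm (?y - x)" by (simp add: dist_norm)
      also have "\<dots> \<le> (\<Sum>i\<in>UNIV. \<bar>(?y - x)$i\<bar>)" by (rule norm_le_l1_cart)
      also have "\<dots> < (\<Sum>i\<in>(UNIV::'d set). e / real CARD('d))"
        by (rule sum_strict_mono) (use y in auto)
      also have "\<dots> = e" by simp
      finally show ?thesis .
    qed
    ultimately show "\<exists>y\<in>{x. tp_bspline t p j x \<noteq> 0}. dist y x < e" by blast
  qed
qed

lemma supp_tp_bspline:
  fixes t :: "'d::finite \<Rightarrow> real list"
  assumes s: "\<forall>i. sorted (t i)" and l: "\<forall>i. j i + p i + 1 < length (t i)"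
  shows "supp (tp_bspline t p j) =
     (if \<forall>i. t i!(j i) < t i!(j i + p i + 1) then coord_box (\<lambda>i. t i!(j i)) (\<lambda>i. t i!(j i + p i + 1)) else {})"
proof (cases "\<forall>i. t i!(j i) < t i!(j i + p i + 1)")
  case True
  then show ?thesis
    using closure_minimal[OF tp_bspline_nonzero_subset_coord_box[OF s l] closed_coord_box]
      coord_box_subset_closure_tp_bspline_nonzero[OF s l True]
    unfolding supp_def by auto
next
  case False
  then obtain i where i: "\<not> t i!(j i) < t i!(j i + p i + 1)" by auto
  have "bspl (t i) (p i) (j i) y = 0" for y
    using bspl_nonneg_support[OF s[rule_format] l[rule_format], of i] i by fastforce
  then have "{x. tp_bspline t p j x \<noteq> 0} = {}" using tp_bspline_nonzero_iff[of t p j] by blast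
  then show ?thesis using False unfolding supp_def by auto
qed

lemma lknots_Suc: "lknots K0 (Suc k) i = refine_knots (lknots K0 k i)"
  unfolding lknots_def by simp

lemma sorted_lknots: "(\<forall>i. sorted (K0 i)) \<Longrightarrow> sorted (lknots K0 k i)"
  by (induction k) (auto simp: lknots_Suc sorted_refine_knots, simp add: lknots_def)

lemma set_lknots_Suc: "(\<forall>i. sorted (K0 i)) \<Longrightarrow>
  set (lknots K0 (Suc k) i) = set (lknots K0 k i) \<union> span_midpoints (set (lknots K0 k i))"
  by (simp add: lknots_Suc set_refine_knots sorted_lknots)

definition level_cell :: "('d::finite \<Rightarrow> real list) \<Rightarrow> nat \<Rightarrow> ('d \<Rightarrow> real) \<Rightarrow> ('d \<Rightarrow> real) \<Rightarrow> bool" where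
  "level_cell K0 k a b \<longleftrightarrow> (\<forall>i. knot_span (set (lknots K0 k i)) (a i) (b i))"

lemma level_cell_lt: "level_cell K0 k a b \<Longrightarrow> a i < b i"
  unfolding level_cell_def knot_span_def by auto

lemma cells_lv_iff:
  assumes s: "\<forall>i. sorted (K0 i)"
  shows "C \<in> cells_lv K0 k \<longleftrightarrow> (\<exists>a b. level_cell K0 k a b \<and> C = coord_box a b)"
proof
  assume "C \<in> cells_lv K0 k"
  then obtain j where j: "\<forall>i. 0 < j i \<and> j i < length (lknots K0 k i) \<and>
            lknots K0 k i ! (j i - 1) < lknots K0 k i ! (j i)"
    and C: "C = {x. \<forall>i. lknots K0 k i ! (j i - 1) \<le> x $ i \<and> x $ i \<le> lknots K0 k i ! (j i)}"
    unfolding cells_lv_def by blast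
  have "level_cell K0 k (\<lambda>i. lknots K0 k i ! (j i - 1)) (\<lambda>i. lknots K0 k i ! (j i))"
    unfolding level_cell_def using knot_span_iff_nth[OF sorted_lknots[OF s]] j by blast
  moreover have "C = coord_box (\<lambda>i. lknots K0 k i ! (j i - 1)) (\<lambda>i. lknots K0 k i ! (j i))"
    unfolding C coord_box_def by simp
  ultimately show "\<exists>a b. level_cell K0 k a b \<and> C = coord_box a b" by blast
next
  assume "\<exists>a b. level_cell K0 k a b \<and> C = coord_box a b"
  then obtain a b where ab: "level_cell K0 k a b" "C = coord_box a b" by blast
  have "\<forall>i. \<exists>j. 0 < j \<and> j < length (lknots K0 k i) \<and> lknots K0 k i ! (j - 1) < lknots K0 k i ! j
       \<and> a i = lknots K0 k i ! (j - 1) \<and> b i = lknots K0 k i ! j"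
    using ab(1) knot_span_iff_nth[OF sorted_lknots[OF s]] unfolding level_cell_def by blast
  then obtain j where j: "\<And>i. 0 < j i \<and> j i < length (lknots K0 k i) \<and> lknots K0 k i ! (j i - 1) < lknots K0 k i ! (j i)
       \<and> a i = lknots K0 k i ! (j i - 1) \<and> b i = lknots K0 k i ! (j i)" by metis
  have "C = {x. \<forall>i. lknots K0 k i ! (j i - 1) \<le> x $ i \<and> x $ i \<le> lknots K0 k i ! (j i)}"
    unfolding ab(2) coord_box_def using j by simp
  then show "C \<in> cells_lv K0 k" unfolding cells_lv_def using j by blast
qed

lemma level_cell_eq_if_common_point:
  assumes "level_cell K0 k a b" "level_cell K0 k e f" "\<forall>i. a i < z i \<and> z i < b i" "\<forall>i. e i \<le> z i \<and> z i \<le> f i"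
  shows "a = e \<and> b = f"
proof -
  have "\<forall>i. a i = e i \<and> b i = f i"
    using knot_span_eq_if_common_point assms unfolding level_cell_def by metis
  then show ?thesis by auto
qed

lemma level_cell_child:
  assumes s: "\<forall>i. sorted (K0 i)" and c: "level_cell K0 k a b" and x: "x \<in> coord_box a b"
  shows "\<exists>c d. level_cell K0 (Suc k) c d \<and> x \<in> coord_box c d \<and> (\<forall>i. a i \<le> c i \<and> d i \<le> b i)"
proof -
  let ?m = "\<lambda>i. (a i + b i) / 2"
  define c where "c = (\<lambda>i. if x$i \<le> ?m i then a i else ?m i)"
  define d where "d = (\<lambda>i. if x$i \<le> ?m i then ?m i else b i)"
  have "level_cell K0 (Suc k) c d"
    unfolding level_cell_def c_def d_def set_lknots_Suc[OF s]
    using knot_span_refined_halves c unfolding level_cell_def by auto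
  moreover have "x \<in> coord_box c d" using x unfolding coord_box_def c_def d_def by auto
  moreover have "\<forall>i. a i \<le> c i \<and> d i \<le> b i"
  proof
    fix i show "a i \<le> c i \<and> d i \<le> b i" using level_cell_lt[OF c, of i] unfolding c_def d_def by auto
  qed
  ultimately show ?thesis by blast
qed

lemma level_cell_parent:
  assumes s: "\<forall>i. sorted (K0 i)" and c: "level_cell K0 (Suc k) c d"
  shows "\<exists>a b. level_cell K0 k a b \<and> (\<forall>i. a i \<le> c i \<and> d i \<le> b i)"
proof -
  have "\<forall>i. \<exists>a b. knot_span (set (lknots K0 k i)) a b \<and> a \<le> c i \<and> d i \<le> b"
    using knot_span_refined_within c unfolding level_cell_def set_lknots_Suc[OF s] by blast
  then obtain a b where "\<And>i. knot_span (set (lknots K0 k i)) (a i) (b i) \<and> a i \<le> c i \<and> d i \<le> b i"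
    by metis
  then show ?thesis unfolding level_cell_def by blast
qed

lemma level_cell_ancestor:
  assumes s: "\<forall>i. sorted (K0 i)" and le: "k' \<le> k" and c: "level_cell K0 k c d"
  shows "\<exists>a b. level_cell K0 k' a b \<and> (\<forall>i. a i \<le> c i \<and> d i \<le> b i)"
  using le c
proof (induction k arbitrary: c d rule: dec_induct)
  case base then show ?case by blast
next
  case (step n)
  obtain a b where ab: "level_cell K0 n a b" "\<forall>i. a i \<le> c i \<and> d i \<le> b i" using level_cell_parent[OF s step.prems] by blast
  obtain a' b' where "level_cell K0 k' a' b'" "\<forall>i. a' i \<le> a i \<and> b i \<le> b' i" using step.IH[OF ab(1)] by blast
  then show ?case using ab by (meson order_trans)
qed

lemma level_cell_covering:
  assumes "\<forall>i. lo i \<in> set (lknots K0 k i) \<and> hi i \<in> set (lknots K0 k i) \<and> lo i < hi i" and x: "x \<in> coord_box lo hi"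
  shows "\<exists>c d. level_cell K0 k c d \<and> x \<in> coord_box c d \<and> (\<forall>i. lo i \<le> c i \<and> d i \<le> hi i)"
proof -
  have "\<forall>i. \<exists>c d. knot_span (set (lknots K0 k i)) c d \<and> lo i \<le> c \<and> c \<le> x$i \<and> x$i \<le> d \<and> d \<le> hi i"
    using knot_span_covering assms unfolding coord_box_def by blast
  then obtain c d where "\<And>i. knot_span (set (lknots K0 k i)) (c i) (d i) \<and> lo i \<le> c i \<and> c i \<le> x$i \<and> x$i \<le> d i \<and> d i \<le> hi i"
    by metis
  then show ?thesis unfolding level_cell_def coord_box_def by blast
qed

lemma coord_box_mono: "\<forall>i. a i \<le> c i \<and> d i \<le> b i \<Longrightarrow> coord_box c d \<subseteq> coord_box a b"
  unfolding coord_box_def by (auto intro: order_trans)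

lemma hier_domains_antimono:
  assumes "hier_domains K0 Om" "k \<le> k'" shows "Om k' \<subseteq> Om k"
  using assms(2)
proof (induction k' rule: dec_induct)
  case base show ?case by simp
next
  case (step n) then show ?case using assms(1) unfolding hier_domains_def by blast
qed

lemma hier_domains_Suc_Union: "hier_domains K0 Om \<Longrightarrow> \<exists>S \<subseteq> cells_lv K0 k. Om (Suc k) = \<Union>S"
  unfolding hier_domains_def by blast

lemma hmesh_covers_domain_cell:
  assumes s: "\<forall>i. sorted (K0 i)" and hd: "hier_domains K0 Om"
    and "level_cell K0 k a b" "coord_box a b \<subseteq> Om k" "x \<in> coord_box a b"
  shows "\<exists>l T. (l, T) \<in> hmesh_lv K0 Om \<and> T \<subseteq> coord_box a b \<and> x \<in> T"
proof -
  obtain M where M: "Om M = {}" using hd unfolding hier_domains_def by blast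
  from assms(3-5) show ?thesis
  proof (induction "M - k" arbitrary: k a b rule: less_induct)
    case less
    show ?case
    proof (cases "coord_box a b \<subseteq> Om (Suc k)")
      case False
      then have "(k, coord_box a b) \<in> hmesh_lv K0 Om"
        unfolding hmesh_lv_def using less.prems(1,2) cells_lv_iff[OF s] by blast
      then show ?thesis using less.prems(3) by blast
    next
      case True
      obtain c d where cd: "level_cell K0 (Suc k) c d" "x \<in> coord_box c d" "\<forall>i. a i \<le> c i \<and> d i \<le> b i"
        using level_cell_child[OF s less.prems(1,3)] by blast
      have sub: "coord_box c d \<subseteq> coord_box a b" using coord_box_mono[OF cd(3)] .
      have "k < M"
        using less.prems(2,3) M hier_domains_antimono[OF hd, of M k] by (cases "M \<le> k") auto
      then have "M - Suc k < M - k" by simp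
      from less.hyps[OF this cd(1) _ cd(2)] sub True show ?thesis by blast
    qed
  qed
qed

lemma level_cell_in_domain_if_subbox:
  assumes s: "\<forall>i. sorted (K0 i)" and hd: "hier_domains K0 Om"
    and c: "level_cell K0 k a b" and lt: "\<forall>i. c i < d i" and sub: "coord_box c d \<subseteq> coord_box a b"
    and om: "coord_box c d \<subseteq> Om (Suc k)"
  shows "coord_box a b \<subseteq> Om (Suc k)"
proof -
  obtain S where S: "S \<subseteq> cells_lv K0 k" "Om (Suc k) = \<Union>S" using hier_domains_Suc_Union[OF hd] by blast
  let ?z = "\<lambda>i. (c i + d i) / 2"
  have lt': "\<forall>i. c i \<le> d i" using lt less_imp_le by blast
  have ac: "\<forall>i. a i \<le> c i \<and> d i \<le> b i" using coord_box_subsetD[OF lt' sub] by blast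
  have "(\<chi> i. ?z i) \<in> coord_box c d" unfolding coord_box_def
  proof (intro CollectI allI)
    fix i show "c i \<le> (\<chi> i. ?z i)$i \<and> (\<chi> i. ?z i)$i \<le> d i" using lt'[rule_format, of i] by simp
  qed
  then obtain D where D: "D \<in> S" "(\<chi> i. ?z i) \<in> D" using om S by auto
  then obtain e f where ef: "level_cell K0 k e f" "D = coord_box e f" using S cells_lv_iff[OF s] by blast
  have "a = e \<and> b = f"
  proof (rule level_cell_eq_if_common_point[OF c ef(1)])
    show "\<forall>i. a i < ?z i \<and> ?z i < b i"
    proof
      fix i have "a i \<le> c i" "d i \<le> b i" "c i < d i" using ac lt by auto
      then show "a i < ?z i \<and> ?z i < b i" by auto
    qed
    show "\<forall>i. e i \<le> ?z i \<and> ?z i \<le> f i" using D(2) ef(2) unfolding coord_box_def by simp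
  qed
  then show ?thesis using D S ef by auto
qed

lemma emeasure_domain_Suc_Int_hmesh:
  assumes s: "\<forall>i. sorted (K0 i)" and hd: "hier_domains K0 Om"
    and T: "(k, T) \<in> hmesh_lv K0 Om" and Y: "Y \<subseteq> Om (Suc k)"
  shows "emeasure lborel (Y \<inter> T) = 0"
proof -
  obtain S where S: "S \<subseteq> cells_lv K0 k" "Om (Suc k) = \<Union>S" using hier_domains_Suc_Union[OF hd] by blast
  have Tc: "T \<in> cells_lv K0 k" "\<not> T \<subseteq> Om (Suc k)" using T unfolding hmesh_lv_def by auto
  then obtain a b where ab: "level_cell K0 k a b" "T = coord_box a b" using cells_lv_iff[OF s] by blast
  let ?I = "Sigma UNIV (\<lambda>i. set (lknots K0 k i))"
  have "Y \<inter> T \<subseteq> (\<Union>ic\<in>?I. {x::real^'a. x$(fst ic) = snd ic})"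
  proof
    fix x assume x: "x \<in> Y \<inter> T"
    then obtain D where D: "D \<in> S" "x \<in> D" using Y S by auto
    then obtain e f where ef: "level_cell K0 k e f" "D = coord_box e f" using S cells_lv_iff[OF s] by blast
    have "D \<noteq> T" using Tc S D by auto
    then have "\<not> (a = e \<and> b = f)" using ab ef by auto
    then obtain i where i: "a i \<noteq> e i \<or> b i \<noteq> f i" by auto
    have sa: "knot_span (set (lknots K0 k i)) (a i) (b i)" using ab(1) unfolding level_cell_def by blast
    have se: "knot_span (set (lknots K0 k i)) (e i) (f i)" using ef(1) unfolding level_cell_def by blast
    have "\<not> max (a i) (e i) < min (b i) (f i)"
    proof
      assume "max (a i) (e i) < min (b i) (f i)"
      from knot_span_eq_if_overlap[OF sa se this] i show False by auto
    qed
    moreover have "max (a i) (e i) \<le> x$i" "x$i \<le> min (b i) (f i)"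
      using x D ab ef unfolding coord_box_def by auto
    ultimately have "x$i = max (a i) (e i)" by auto
    moreover have "max (a i) (e i) \<in> set (lknots K0 k i)"
      using ab(1) ef(1) unfolding level_cell_def knot_span_def by (auto simp: max_def)
    ultimately show "x \<in> (\<Union>ic\<in>?I. {x::real^'a. x$(fst ic) = snd ic})"
      by (intro UN_I[of "(i, max (a i) (e i))"]) auto
  qed
  then show ?thesis by (intro emeasure_subset_coordinate_hyperplanes[of ?I]) auto
qed

lemma hmesh_lv_cell_in_box:
  assumes s: "\<forall>i. sorted (K0 i)"
    and lh: "\<forall>i. lo i \<in> set (lknots K0 k i) \<and> hi i \<in> set (lknots K0 k i) \<and> lo i < hi i"
    and sub: "coord_box lo hi \<subseteq> Om k" and nsub: "\<not> coord_box lo hi \<subseteq> Om (Suc k)"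
  shows "\<exists>C. (k, C) \<in> hmesh_lv K0 Om \<and> C \<subseteq> coord_box lo hi"
proof -
  obtain x where x: "x \<in> coord_box lo hi" "x \<notin> Om (Suc k)" using nsub by auto
  obtain c d where cd: "level_cell K0 k c d" "x \<in> coord_box c d" "\<forall>i. lo i \<le> c i \<and> d i \<le> hi i"
    using level_cell_covering[OF lh x(1)] by blast
  have "coord_box c d \<subseteq> coord_box lo hi" using coord_box_mono[OF cd(3)] .
  moreover have "coord_box c d \<in> cells_lv K0 k" using cells_lv_iff[OF s] cd(1) by blast
  ultimately have "(k, coord_box c d) \<in> hmesh_lv K0 Om" unfolding hmesh_lv_def using sub x cd(2) by blast
  then show ?thesis using \<open>coord_box c d \<subseteq> coord_box lo hi\<close> by blast
qed

lemma admissibleD: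
  assumes "admissible K0 p Om" "(k, T) \<in> hmesh_lv K0 Om" "(k', T') \<in> hmesh_lv K0 Om"
    "\<beta> \<in> hbasis K0 p Om" "T \<subseteq> supp \<beta>" "T' \<subseteq> supp \<beta>"
  shows "\<bar>int k - int k'\<bar> \<le> 1"
  using assms unfolding admissible_def by fastforce

lemma hmesh_iff: "T \<in> hmesh K0 Om \<longleftrightarrow> (\<exists>k. (k, T) \<in> hmesh_lv K0 Om)"
  unfolding hmesh_def by force

lemma hbasisE:
  assumes s: "\<forall>i. sorted (K0 i)" and \<beta>: "\<beta> \<in> hbasis K0 p Om"
  obtains k j lo hi where "\<beta> = tp_bspline (lknots K0 k) p j"
    "\<forall>i. j i + p i + 1 < length (lknots K0 k i)"
    "lo = (\<lambda>i. lknots K0 k i ! (j i))" "hi = (\<lambda>i. lknots K0 k i ! (j i + p i + 1))"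
    "\<forall>i. lo i \<in> set (lknots K0 k i) \<and> hi i \<in> set (lknots K0 k i) \<and> lo i < hi i"
    "supp \<beta> = coord_box lo hi" "supp \<beta> \<subseteq> Om k" "\<not> supp \<beta> \<subseteq> Om (Suc k)"
proof -
  obtain k where k: "\<beta> \<in> bsplines_lv K0 p k" "supp \<beta> \<subseteq> Om k" "\<not> supp \<beta> \<subseteq> Om (Suc k)"
    using \<beta> unfolding hbasis_def by blast
  obtain j where j: "\<beta> = tp_bspline (lknots K0 k) p j" "\<forall>i. j i + p i + 1 < length (lknots K0 k i)"
    using k(1) unfolding bsplines_lv_def by blast
  define lo where "lo = (\<lambda>i. lknots K0 k i ! (j i))"
  define hi where "hi = (\<lambda>i. lknots K0 k i ! (j i + p i + 1))"
  have supp: "supp \<beta> = (if \<forall>i. lo i < hi i then coord_box lo hi else {})"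
    unfolding j(1) lo_def hi_def using supp_tp_bspline[OF _ j(2)] sorted_lknots[OF s] by blast
  then have lt: "\<forall>i. lo i < hi i" using k(3) by (metis empty_subsetI)
  have "lo i \<in> set (lknots K0 k i) \<and> hi i \<in> set (lknots K0 k i)" for i
    unfolding lo_def hi_def using j(2)[rule_format, of i] by auto
  with that[OF j lo_def hi_def] lt supp k(2,3) show ?thesis by auto
qed

section \<open>Counting the mesh elements in the support of a basis function\<close>

lemma coord_box_eq_Union_hmesh:
  assumes s: "\<forall>i. sorted (K0 i)" and hd: "hier_domains K0 Om"
    and lh: "\<forall>i. lo i \<in> set (lknots K0 k i) \<and> hi i \<in> set (lknots K0 k i) \<and> lo i < hi i"
    and sub: "coord_box lo hi \<subseteq> Om k"
  shows "coord_box lo hi = \<Union>{T \<in> hmesh K0 Om. T \<subseteq> coord_box lo hi}"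
proof
  show "coord_box lo hi \<subseteq> \<Union>{T \<in> hmesh K0 Om. T \<subseteq> coord_box lo hi}"
  proof
    fix x assume x: "x \<in> coord_box lo hi"
    obtain c d where cd: "level_cell K0 k c d" "x \<in> coord_box c d" "\<forall>i. lo i \<le> c i \<and> d i \<le> hi i"
      using level_cell_covering[OF lh x] by blast
    have cd_sub: "coord_box c d \<subseteq> coord_box lo hi" using coord_box_mono[OF cd(3)] .
    with sub have "coord_box c d \<subseteq> Om k" by (rule order_trans[rotated])
    then obtain T k' where "(k', T) \<in> hmesh_lv K0 Om" "T \<subseteq> coord_box c d" "x \<in> T"
      using hmesh_covers_domain_cell[OF s hd cd(1) _ cd(2)] by blast
    then show "x \<in> \<Union>{T \<in> hmesh K0 Om. T \<subseteq> coord_box lo hi}"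
      using cd_sub hmesh_iff by blast
  qed
qed auto

lemma hmesh_level_in_supp_hbasis:
  assumes s: "\<forall>i. sorted (K0 i)" and hd: "hier_domains K0 Om" and adm: "admissible K0 p Om"
    and \<beta>: "\<beta> \<in> hbasis K0 p Om"
    and lh: "\<forall>i. lo i \<in> set (lknots K0 k i) \<and> hi i \<in> set (lknots K0 k i) \<and> lo i < hi i"
    and supp: "supp \<beta> = coord_box lo hi" "supp \<beta> \<subseteq> Om k" "\<not> supp \<beta> \<subseteq> Om (Suc k)"
    and T: "(l, T) \<in> hmesh_lv K0 Om" "T \<subseteq> supp \<beta>"
  shows "l = k \<or> l = Suc k"
proof -
  obtain C where C: "(k, C) \<in> hmesh_lv K0 Om" "C \<subseteq> coord_box lo hi"
    using hmesh_lv_cell_in_box[OF s lh, of Om] supp(1-3) by auto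
  have "\<bar>int l - int k\<bar> \<le> 1" using admissibleD[OF adm T(1) C(1) \<beta> T(2)] C(2) supp(1) by auto
  moreover have "k \<le> l"
  proof (rule ccontr)
    assume "\<not> k \<le> l"
    then have "T \<subseteq> Om (Suc l)" using hier_domains_antimono[OF hd, of "Suc l" k] T(2) supp(2) by auto
    then show False using T(1) unfolding hmesh_lv_def by auto
  qed
  ultimately show ?thesis by auto
qed

lemma level_cell_same_lower_corner:
  assumes "level_cell K0 l a b" "level_cell K0 l a b'"
  shows "b = b'"
proof
  fix i
  have "knot_span (set (lknots K0 l i)) (a i) (b i)" "knot_span (set (lknots K0 l i)) (a i) (b' i)"
    using assms unfolding level_cell_def by blast+
  then show "b i = b' i" unfolding knot_span_def by force
qed

text \<open>The level-\<open>(k + 1)\<close> element would lie inside the level-\<open>k\<close> one and force it into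
  \<open>Om (Suc k)\<close>.\<close>
lemma hmesh_lv_lower_corner_level_Suc:
  assumes s: "\<forall>i. sorted (K0 i)" and hd: "hier_domains K0 Om"
    and ab: "level_cell K0 k a b" "(k, coord_box a b) \<in> hmesh_lv K0 Om"
    and ab': "level_cell K0 (Suc k) a b'"
  shows "(Suc k, coord_box a b') \<notin> hmesh_lv K0 Om"
proof
  assume mesh: "(Suc k, coord_box a b') \<in> hmesh_lv K0 Om"
  have "b' i \<le> b i" for i
  proof -
    have "knot_span (set (lknots K0 (Suc k) i)) (a i) (b' i)"
      using ab' unfolding level_cell_def by blast
    moreover have "b i \<in> set (lknots K0 (Suc k) i)" "a i < b i"
      using ab(1) set_lknots_Suc[OF s] unfolding level_cell_def knot_span_def by auto
    ultimately show ?thesis unfolding knot_span_def by force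
  qed
  then have "coord_box a b' \<subseteq> coord_box a b" by (intro coord_box_mono) simp
  moreover have "coord_box a b' \<subseteq> Om (Suc k)" using mesh unfolding hmesh_lv_def by auto
  ultimately have "coord_box a b \<subseteq> Om (Suc k)"
    using level_cell_in_domain_if_subbox[OF s hd ab(1)] level_cell_lt[OF ab'] by blast
  then show False using ab(2) unfolding hmesh_lv_def by auto
qed

lemma card_refined_knots_in_bspline_box:
  fixes K0 :: "'d::finite \<Rightarrow> real list"
  assumes s: "\<forall>i. sorted (K0 i)" and j: "\<forall>i. j i + p i + 1 < length (lknots K0 k i)"
  shows "card (PiE UNIV (\<lambda>i. set (lknots K0 (Suc k) i)
            \<inter> {lknots K0 k i ! (j i)..<lknots K0 k i ! (j i + p i + 1)}))
         \<le> (\<Prod>i\<in>UNIV. 2 * (p i + 1))"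
  unfolding card_PiE[OF finite] 
proof (rule prod_mono)
  fix i
  let ?I = "{lknots K0 k i ! (j i)..<lknots K0 k i ! (j i + p i + 1)}"
  have "lknots K0 k i ! (j i) \<in> set (lknots K0 k i)" using j[rule_format, of i] by simp
  then have "card (set (lknots K0 (Suc k) i) \<inter> ?I) \<le> 2 * card (set (lknots K0 k i) \<inter> ?I)"
    unfolding set_lknots_Suc[OF s] by (intro card_refined_knots_Ico) simp
  also have "\<dots> \<le> 2 * (p i + 1)"
    using card_knots_Ico_nth[OF sorted_lknots[OF s] j[rule_format, of i]] by simp
  finally show "0 \<le> card (set (lknots K0 (Suc k) i) \<inter> ?I) \<and>
      card (set (lknots K0 (Suc k) i) \<inter> ?I) \<le> 2 * (p i + 1)" by simp
qed

definition hmesh_cells_in :: "('d::finite \<Rightarrow> real list) \<Rightarrow> (nat \<Rightarrow> (real^'d) set) \<Rightarrow> (real^'d) set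
    \<Rightarrow> (nat \<times> ('d \<Rightarrow> real) \<times> ('d \<Rightarrow> real)) set" where
  "hmesh_cells_in K0 Om B = {(l, a, b). level_cell K0 l a b \<and> (l, coord_box a b) \<in> hmesh_lv K0 Om
                                \<and> coord_box a b \<subseteq> B}"

lemma hmesh_subset_image_hmesh_cells_in:
  assumes s: "\<forall>i. sorted (K0 i)"
  shows "{T \<in> hmesh K0 Om. T \<subseteq> B} \<subseteq> (\<lambda>(l, a, b). coord_box a b) ` hmesh_cells_in K0 Om B"
proof
  fix T assume "T \<in> {T \<in> hmesh K0 Om. T \<subseteq> B}"
  then obtain l where l: "(l, T) \<in> hmesh_lv K0 Om" "T \<subseteq> B" unfolding hmesh_iff by blast
  then obtain a b where "level_cell K0 l a b" "T = coord_box a b"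
    using cells_lv_iff[OF s] unfolding hmesh_lv_def by blast
  with l show "T \<in> (\<lambda>(l, a, b). coord_box a b) ` hmesh_cells_in K0 Om B"
    unfolding hmesh_cells_in_def by force
qed

lemma inj_on_lower_corner_hmesh_cells_in:
  assumes s: "\<forall>i. sorted (K0 i)" and hd: "hier_domains K0 Om"
    and level: "\<And>l a b. (l, a, b) \<in> hmesh_cells_in K0 Om B \<Longrightarrow> l = k \<or> l = Suc k"
  shows "inj_on (\<lambda>(l, a, b). a) (hmesh_cells_in K0 Om B)"
proof (rule inj_onI)
  fix x y assume C: "x \<in> hmesh_cells_in K0 Om B" "y \<in> hmesh_cells_in K0 Om B"
    and corner: "(\<lambda>(l, a, b). a) x = (\<lambda>(l, a, b). a) y"
  obtain l l' a b b' where xy: "x = (l, a, b)" "y = (l', a, b')"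
    using corner by (metis case_prod_conv prod_cases3)
  with C have lab: "(l, a, b) \<in> hmesh_cells_in K0 Om B" and lab': "(l', a, b') \<in> hmesh_cells_in K0 Om B"
    by simp_all
  have cells: "level_cell K0 l a b" "level_cell K0 l' a b'"
    and mesh: "(l, coord_box a b) \<in> hmesh_lv K0 Om" "(l', coord_box a b') \<in> hmesh_lv K0 Om"
    using lab lab' unfolding hmesh_cells_in_def by auto
  have "l = l'"
  proof (rule ccontr)
    assume "l \<noteq> l'"
    then consider "l = k" "l' = Suc k" | "l = Suc k" "l' = k" using level[OF lab] level[OF lab'] by blast
    then show False
    proof cases
      case 1
      then show False using hmesh_lv_lower_corner_level_Suc[OF s hd, of k a b b'] cells mesh by simp
    next
      case 2
      then show False using hmesh_lv_lower_corner_level_Suc[OF s hd, of k a b' b] cells mesh by simp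
    qed
  qed
  then show "x = y" using xy level_cell_same_lower_corner cells by blast
qed

lemma lower_corner_hmesh_cells_in_subset:
  assumes s: "\<forall>i. sorted (K0 i)"
    and level: "\<And>l a b. (l, a, b) \<in> hmesh_cells_in K0 Om (coord_box lo hi) \<Longrightarrow> l = k \<or> l = Suc k"
  shows "(\<lambda>(l, a, b). a) ` hmesh_cells_in K0 Om (coord_box lo hi)
           \<subseteq> PiE UNIV (\<lambda>i. set (lknots K0 (Suc k) i) \<inter> {lo i..<hi i})"
proof clarify
  fix l a b assume lab: "(l, a, b) \<in> hmesh_cells_in K0 Om (coord_box lo hi)"
  then have cell: "level_cell K0 l a b" and box: "coord_box a b \<subseteq> coord_box lo hi"
    unfolding hmesh_cells_in_def by auto
  have "set (lknots K0 l i) \<subseteq> set (lknots K0 (Suc k) i)" for i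
    using level[OF lab] set_lknots_Suc[OF s] by auto
  moreover have "lo i \<le> a i \<and> b i \<le> hi i" for i
    using coord_box_subsetD[OF _ box] level_cell_lt[OF cell] less_imp_le by blast
  ultimately show "a \<in> PiE UNIV (\<lambda>i. set (lknots K0 (Suc k) i) \<inter> {lo i..<hi i})"
    using cell level_cell_lt[OF cell] unfolding level_cell_def knot_span_def
    by (fastforce intro: less_le_trans)
qed

lemma card_hmesh_in_supp_hbasis:
  fixes K0 :: "'d::finite \<Rightarrow> real list"
  assumes s: "\<forall>i. sorted (K0 i)" and hd: "hier_domains K0 Om" and adm: "admissible K0 p Om"
    and \<beta>: "\<beta> \<in> hbasis K0 p Om"
  shows "\<exists>S \<subseteq> hmesh K0 Om. finite S \<and> card S \<le> (\<Prod>i\<in>UNIV. 2 * (p i + 1)) \<and> supp \<beta> = \<Union>S"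
proof -
  obtain k j lo hi where "\<beta> = tp_bspline (lknots K0 k) p j"
    and j: "\<forall>i. j i + p i + 1 < length (lknots K0 k i)"
    and lohi: "lo = (\<lambda>i. lknots K0 k i ! (j i))" "hi = (\<lambda>i. lknots K0 k i ! (j i + p i + 1))"
    and lh: "\<forall>i. lo i \<in> set (lknots K0 k i) \<and> hi i \<in> set (lknots K0 k i) \<and> lo i < hi i"
    and supp: "supp \<beta> = coord_box lo hi" "supp \<beta> \<subseteq> Om k" "\<not> supp \<beta> \<subseteq> Om (Suc k)"
    by (rule hbasisE[OF s \<beta>])
  define S where "S = {T \<in> hmesh K0 Om. T \<subseteq> supp \<beta>}"
  define C where "C = hmesh_cells_in K0 Om (coord_box lo hi)"
  define P where "P = PiE UNIV (\<lambda>i. set (lknots K0 (Suc k) i) \<inter> {lo i..<hi i})"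
  have level: "l = k \<or> l = Suc k" if "(l, a, b) \<in> C" for l a b
    using hmesh_level_in_supp_hbasis[OF s hd adm \<beta> lh supp] that supp(1)
    unfolding C_def hmesh_cells_in_def by blast
  have S_sub: "S \<subseteq> (\<lambda>(l, a, b). coord_box a b) ` C"
    using hmesh_subset_image_hmesh_cells_in[OF s] unfolding S_def C_def supp(1) .
  have corner_C: "(\<lambda>(l, a, b). a) ` C \<subseteq> P"
    using lower_corner_hmesh_cells_in_subset[OF s] level unfolding C_def P_def by blast
  have inj: "inj_on (\<lambda>(l, a, b). a) C"
    using inj_on_lower_corner_hmesh_cells_in[OF s hd] level unfolding C_def by blast
  have finP: "finite P" unfolding P_def by (intro finite_PiE) auto
  then have finC: "finite C" using finite_imageD[OF finite_subset[OF corner_C] inj] by blast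
  have "card S \<le> card ((\<lambda>(l, a, b). coord_box a b) ` C)"
    using card_mono[OF finite_imageI[OF finC] S_sub] .
  also have "\<dots> \<le> card C" using card_image_le[OF finC] .
  also have "\<dots> = card ((\<lambda>(l, a, b). a) ` C)" using card_image[OF inj] by simp
  also have "\<dots> \<le> card P" using card_mono[OF finP corner_C] .
  also have "\<dots> \<le> (\<Prod>i\<in>UNIV. 2 * (p i + 1))"
    unfolding P_def lohi using card_refined_knots_in_bspline_box[OF s j] .
  finally have "finite S \<and> card S \<le> (\<Prod>i\<in>UNIV. 2 * (p i + 1))"
    using finite_subset[OF S_sub finite_imageI[OF finC]] by blast
  moreover have "supp \<beta> = \<Union>S"
    using coord_box_eq_Union_hmesh[OF s hd lh supp(2)[unfolded supp(1)]] unfolding S_def supp(1) .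
  moreover have "S \<subseteq> hmesh K0 Om" unfolding S_def by blast
  ultimately show ?thesis by blast
qed

section \<open>Counting the basis functions overlapping a mesh element\<close>

definition overlapping_indices :: "('d::finite \<Rightarrow> real list) \<Rightarrow> ('d \<Rightarrow> nat) \<Rightarrow> nat
    \<Rightarrow> ('d \<Rightarrow> real) \<Rightarrow> ('d \<Rightarrow> real) \<Rightarrow> ('d \<Rightarrow> nat) set" where
  "overlapping_indices K0 p l a b = PiE UNIV (\<lambda>i. {m. m + p i + 1 < length (lknots K0 l i)
       \<and> lknots K0 l i ! m < b i \<and> a i < lknots K0 l i ! (m + p i + 1)})"

lemma card_overlapping_indices:
  fixes K0 :: "'d::finite \<Rightarrow> real list"
  assumes s: "\<forall>i. sorted (K0 i)" and "l \<le> k" and ab: "level_cell K0 k a b"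
  shows "finite (overlapping_indices K0 p l a b)"
    "card (overlapping_indices K0 p l a b) \<le> (\<Prod>i\<in>UNIV. p i + 1)"
proof -
  define N where "N i = {m. m + p i + 1 < length (lknots K0 l i)
       \<and> lknots K0 l i ! m < b i \<and> a i < lknots K0 l i ! (m + p i + 1)}" for i
  obtain a' b' where ab': "level_cell K0 l a' b'" "\<forall>i. a' i \<le> a i \<and> b i \<le> b' i"
    using level_cell_ancestor[OF s assms(2) ab] by blast
  have N: "finite (N i) \<and> card (N i) \<le> p i + 1" for i
  proof -
    have "knot_span (set (lknots K0 l i)) (a' i) (b' i)" using ab'(1) unfolding level_cell_def by blast
    moreover have "a' i \<le> a i" "b i \<le> b' i" using ab'(2) by auto
    ultimately show ?thesis
      using card_bspline_indices_overlapping_span[OF sorted_lknots[OF s], of l i "a' i" "b' i" "a i" "b i" "p i"]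
      unfolding N_def by simp
  qed
  have eq: "overlapping_indices K0 p l a b = PiE UNIV N" unfolding overlapping_indices_def N_def ..
  show "finite (overlapping_indices K0 p l a b)" unfolding eq using N by (intro finite_PiE) auto
  show "card (overlapping_indices K0 p l a b) \<le> (\<Prod>i\<in>UNIV. p i + 1)"
    unfolding eq card_PiE[OF finite] by (rule prod_mono) (use N in auto)
qed

lemma knot_span_subset_if_overlap:
  assumes "knot_span V a b" "lo \<in> V" "hi \<in> V" "lo < b" "a < hi"
  shows "lo \<le> a \<and> b \<le> hi"
  using assms unfolding knot_span_def by force

lemma coord_box_overlap_if_emeasure_pos:
  assumes "emeasure lborel (coord_box lo hi \<inter> coord_box a b) > 0"
  shows "lo i < b i \<and> a i < hi i"
proof (rule ccontr)
  assume "\<not> (lo i < b i \<and> a i < hi i)"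
  then have "min (hi i) (b i) \<le> max (lo i) (a i)" by auto
  then have "emeasure lborel (coord_box lo hi \<inter> coord_box a b) = 0"
    unfolding coord_box_Int by (intro emeasure_degenerate_coord_box) auto
  with assms show False by simp
qed

lemma hbasis_overlapping_hmesh_lv:
  fixes K0 :: "'d::finite \<Rightarrow> real list"
  assumes s: "\<forall>i. sorted (K0 i)" and hd: "hier_domains K0 Om" and adm: "admissible K0 p Om"
    and kT: "(k, T) \<in> hmesh_lv K0 Om" and ab: "level_cell K0 k a b" "T = coord_box a b"
    and \<beta>: "\<beta> \<in> hbasis K0 p Om" and pos: "emeasure lborel (supp \<beta> \<inter> T) > 0"
  obtains l j where "l = k \<or> l = k - 1" "j \<in> overlapping_indices K0 p l a b"
    "\<beta> = tp_bspline (lknots K0 l) p j"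
proof -
  obtain l j lo hi where \<beta>j: "\<beta> = tp_bspline (lknots K0 l) p j"
    and j: "\<forall>i. j i + p i + 1 < length (lknots K0 l i)"
    and lohi: "lo = (\<lambda>i. lknots K0 l i ! (j i))" "hi = (\<lambda>i. lknots K0 l i ! (j i + p i + 1))"
    and lh: "\<forall>i. lo i \<in> set (lknots K0 l i) \<and> hi i \<in> set (lknots K0 l i) \<and> lo i < hi i"
    and supp: "supp \<beta> = coord_box lo hi" "supp \<beta> \<subseteq> Om l" "\<not> supp \<beta> \<subseteq> Om (Suc l)"
    by (rule hbasisE[OF s \<beta>])
  have lk: "l \<le> k"
  proof (rule ccontr)
    assume "\<not> l \<le> k"
    then have "supp \<beta> \<subseteq> Om (Suc k)" using hier_domains_antimono[OF hd, of "Suc k" l] supp(2) by auto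
    then show False using emeasure_domain_Suc_Int_hmesh[OF s hd kT] pos by simp
  qed
  have overlap: "lo i < b i \<and> a i < hi i" for i
    using coord_box_overlap_if_emeasure_pos[of lo hi a b] pos supp(1) ab(2) by simp
  obtain a' b' where ab': "level_cell K0 l a' b'" "\<forall>i. a' i \<le> a i \<and> b i \<le> b' i"
    using level_cell_ancestor[OF s lk ab(1)] by blast
  have "lo i \<le> a' i \<and> b' i \<le> hi i" for i
  proof (rule knot_span_subset_if_overlap)
    show "knot_span (set (lknots K0 l i)) (a' i) (b' i)" using ab'(1) unfolding level_cell_def by blast
  qed (use lh overlap[of i] ab'(2) in \<open>auto intro: less_le_trans le_less_trans\<close>)
  then have "T \<subseteq> supp \<beta>"
    using coord_box_mono ab'(2) ab(2) supp(1) by (metis (no_types, lifting) order_trans)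
  moreover obtain C where "(l, C) \<in> hmesh_lv K0 Om" "C \<subseteq> supp \<beta>"
    using hmesh_lv_cell_in_box[OF s lh, of Om] supp(1-3) by auto
  ultimately have "\<bar>int k - int l\<bar> \<le> 1" using admissibleD[OF adm kT _ \<beta>] by blast
  then have "l = k \<or> l = k - 1" using lk by auto
  moreover have "j \<in> overlapping_indices K0 p l a b"
    using j overlap unfolding overlapping_indices_def lohi by auto
  ultimately show ?thesis using that \<beta>j by blast
qed

lemma card_hbasis_overlapping_hmesh:
  fixes K0 :: "'d::finite \<Rightarrow> real list"
  assumes s: "\<forall>i. sorted (K0 i)" and hd: "hier_domains K0 Om" and adm: "admissible K0 p Om"
    and T: "T \<in> hmesh K0 Om"
  shows "finite {\<beta> \<in> hbasis K0 p Om. emeasure lborel (supp \<beta> \<inter> T) > 0}"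
    "card {\<beta> \<in> hbasis K0 p Om. emeasure lborel (supp \<beta> \<inter> T) > 0} \<le> 2 * (\<Prod>i\<in>UNIV. p i + 1)"
proof -
  obtain k where kT: "(k, T) \<in> hmesh_lv K0 Om" using T hmesh_iff by blast
  then obtain a b where ab: "level_cell K0 k a b" "T = coord_box a b"
    using cells_lv_iff[OF s] unfolding hmesh_lv_def by blast
  let ?F = "{\<beta> \<in> hbasis K0 p Om. emeasure lborel (supp \<beta> \<inter> T) > 0}"
  let ?B = "\<lambda>l. tp_bspline (lknots K0 l) p ` overlapping_indices K0 p l a b"
  have sub: "?F \<subseteq> ?B (k - 1) \<union> ?B k"
  proof
    fix \<beta> assume "\<beta> \<in> ?F"
    then obtain l j where "l = k \<or> l = k - 1" "j \<in> overlapping_indices K0 p l a b"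
        "\<beta> = tp_bspline (lknots K0 l) p j"
      using hbasis_overlapping_hmesh_lv[OF s hd adm kT ab] by blast
    then show "\<beta> \<in> ?B (k - 1) \<union> ?B k" by blast
  qed
  have finB: "finite (?B l)" and cardB: "card (?B l) \<le> (\<Prod>i\<in>UNIV. p i + 1)" if "l \<le> k" for l
    using card_overlapping_indices[OF s that ab(1)] card_image_le le_trans by blast+
  show "finite ?F" using finite_subset[OF sub] finB by simp
  have "card ?F \<le> card (?B (k - 1) \<union> ?B k)" using card_mono[OF _ sub] finB by simp
  also have "\<dots> \<le> card (?B (k - 1)) + card (?B k)" by (rule card_Un_le)
  also have "\<dots> \<le> 2 * (\<Prod>i\<in>UNIV. p i + 1)" using cardB[of k] cardB[of "k - 1"] by simp
  finally show "card ?F \<le> 2 * (\<Prod>i\<in>UNIV. p i + 1)" .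
qed

theorem proposition3p3:
  fixes K0 :: "'d::finite \<Rightarrow> real list"
    and p :: "'d \<Rightarrow> nat"
    and Om :: "nat \<Rightarrow> (real^'d) set"
  assumes "CARD('d) \<ge> 2"
    and "\<And>i. p i \<ge> 1"
    and "\<And>i. open_knot_vector (p i) (K0 i)"
    and "hier_domains K0 Om"
    and "admissible K0 p Om"
  shows "(\<forall>\<beta> \<in> hbasis K0 p Om. \<exists>S \<subseteq> hmesh K0 Om. finite S \<and>
            card S \<le> 2 ^ CARD('d) * (Max (range p) + 1) ^ CARD('d) \<and> supp \<beta> = \<Union>S)
       \<and> (\<forall>T \<in> hmesh K0 Om.
            finite {\<beta>' \<in> hbasis K0 p Om. emeasure lborel (supp \<beta>' \<inter> T) > 0} \<and>
            card {\<beta>' \<in> hbasis K0 p Om. emeasure lborel (supp \<beta>' \<inter> T) > 0}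
              \<le> 2 * (Max (range p) + 1) ^ CARD('d))"
proof -
  have s: "\<forall>i. sorted (K0 i)" using assms(3) unfolding open_knot_vector_def by blast
  have pM: "p i \<le> Max (range p)" for i by (rule Max_ge) auto
  have "(\<Prod>i\<in>UNIV. 2 * (p i + 1)) \<le> (2 * (Max (range p) + 1)) ^ CARD('d)"
    by (rule prod_le_power) (use pM in auto)
  then have bound1: "(\<Prod>i\<in>UNIV. 2 * (p i + 1)) \<le> 2 ^ CARD('d) * (Max (range p) + 1) ^ CARD('d)"
    by (simp only: power_mult_distrib)
  have bound2: "(\<Prod>i\<in>UNIV. p i + 1) \<le> (Max (range p) + 1) ^ CARD('d)"
    by (rule prod_le_power) (use pM in auto)
  show ?thesis
    using card_hmesh_in_supp_hbasis[OF s assms(4,5)] card_hbasis_overlapping_hmesh[OF s assms(4,5)]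
      bound1 bound2 by (meson le_trans mult_le_mono2)
qed

end
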